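(* Let $N$ be a tree-child phylogenetic network such that no two parents of a hybrid node are connected by a path, and let $N'=(V',E')$ be its contracted version. For every $u\in V'$ let $M_u=\{w\in V'\mid C^{(N')}(w)\subsetneq C^{(N')}(u)\}$. Then the maximal elements of $M_u$ with respect to the path ordering on $N'$ are exactly the children of $u$ in $N'$.
   Context: A DAG is labeled in a finite set $S$ if its leaves (out-degree 0) are bijectively labeled by $S$. A tree node has in-degree at most 1; a hybrid node has in-degree greater than 1; a tree child is a child that is a tree node. A tree-child phylogenetic network is a rooted DAG labeled in $S$ in which every non-leaf node has at least one tree child, no tree node has out-degree 1, and every hybrid node has out-degree exactly 1. The condition that no two parents of a hybrid node are connected by a path means: if $u_1,u_2$ are the parents of a hybrid node, there is no path $u_1\rightsquigarrow u_2$ nor $u_2\rightsquigarrow u_1$. The contracted version $N'$ of $N$ is obtained as follows: for every hybrid node $u$ of $N$, with only child $\bar u$ whose children are $\bar u_1,\dots,\bar u_k$, remove $\bar u$ and all arcs incident to it, and add arcs $(u,\bar u_1),\dots,(u,\bar u_k)$; thus $V'$ is the set of nodes of $N$ other than children of hybrid nodes. $C^{(N')}(w)$ is the set of leaves that are descendants of $w$ in $N'$. The path ordering on $N'$ is $x\ge y$ iff there is a path from $x$ to $y$ in $N'$. *)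

theory Defs
  imports Main
begin

definition parents :: "('a \<times> 'a) set \<Rightarrow> 'a \<Rightarrow> 'a set" where
  "parents E v = {u. (u, v) \<in> E}"

definition children :: "('a \<times> 'a) set \<Rightarrow> 'a \<Rightarrow> 'a set" where
  "children E u = {v. (u, v) \<in> E}"

definition indeg :: "('a \<times> 'a) set \<Rightarrow> 'a \<Rightarrow> nat" where
  "indeg E v = card (parents E v)"

definition outdeg :: "('a \<times> 'a) set \<Rightarrow> 'a \<Rightarrow> nat" where
  "outdeg E u = card (children E u)"

definition leaves :: "'a set \<Rightarrow> ('a \<times> 'a) set \<Rightarrow> 'a set" where
  "leaves V E = {v \<in> V. outdeg E v = 0}"

definition is_tree_node :: "('a \<times> 'a) set \<Rightarrow> 'a \<Rightarrow> bool" where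
  "is_tree_node E v \<longleftrightarrow> indeg E v \<le> 1"

definition is_hybrid :: "('a \<times> 'a) set \<Rightarrow> 'a \<Rightarrow> bool" where
  "is_hybrid E v \<longleftrightarrow> indeg E v > 1"

definition rooted_dag :: "'a set \<Rightarrow> ('a \<times> 'a) set \<Rightarrow> bool" where
  "rooted_dag V E \<longleftrightarrow> finite V \<and> E \<subseteq> V \<times> V \<and> acyclic E \<and>
     (\<exists>r\<in>V. \<forall>v\<in>V. (r, v) \<in> E\<^sup>*)"

definition labeled_in :: "'a set \<Rightarrow> ('a \<times> 'a) set \<Rightarrow> ('a \<Rightarrow> 's) \<Rightarrow> 's set \<Rightarrow> bool" where
  "labeled_in V E lab S \<longleftrightarrow> bij_betw lab (leaves V E) S"

definition tree_child_network ::
  "'a set \<Rightarrow> ('a \<times> 'a) set \<Rightarrow> ('a \<Rightarrow> 's) \<Rightarrow> 's set \<Rightarrow> bool" where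
  "tree_child_network V E lab S \<longleftrightarrow>
     rooted_dag V E \<and> labeled_in V E lab S \<and>
     (\<forall>v\<in>V. v \<notin> leaves V E \<longrightarrow> (\<exists>c\<in>children E v. is_tree_node E c)) \<and>
     (\<forall>v\<in>V. is_tree_node E v \<longrightarrow> outdeg E v \<noteq> 1) \<and>
     (\<forall>v\<in>V. is_hybrid E v \<longrightarrow> outdeg E v = 1)"

definition hybrid_parents_unconnected :: "'a set \<Rightarrow> ('a \<times> 'a) set \<Rightarrow> bool" where
  "hybrid_parents_unconnected V E \<longleftrightarrow>
     (\<forall>h\<in>V. is_hybrid E h \<longrightarrow>
        (\<forall>u1\<in>parents E h. \<forall>u2\<in>parents E h. u1 \<noteq> u2 \<longrightarrow>
           (u1, u2) \<notin> E\<^sup>* \<and> (u2, u1) \<notin> E\<^sup>*))"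

text \<open>Contracted version: remove every child of a hybrid node and connect the
  hybrid node directly to the children of its child.\<close>
definition contracted_nodes :: "'a set \<Rightarrow> ('a \<times> 'a) set \<Rightarrow> 'a set" where
  "contracted_nodes V E = V - {c. \<exists>u\<in>V. is_hybrid E u \<and> (u, c) \<in> E}"

definition contracted_arcs :: "'a set \<Rightarrow> ('a \<times> 'a) set \<Rightarrow> ('a \<times> 'a) set" where
  "contracted_arcs V E =
     {(x, y). (x, y) \<in> E \<and> x \<in> contracted_nodes V E \<and> y \<in> contracted_nodes V E}
     \<union> {(u, w). u \<in> V \<and> is_hybrid E u \<and> (\<exists>c. (u, c) \<in> E \<and> (c, w) \<in> E)}"

definition cluster :: "'a set \<Rightarrow> ('a \<times> 'a) set \<Rightarrow> 'a \<Rightarrow> 'a set" where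
  "cluster V E w = {l \<in> leaves V E. (w, l) \<in> E\<^sup>*}"

definition path_maximal :: "('a \<times> 'a) set \<Rightarrow> 'a set \<Rightarrow> 'a set" where
  "path_maximal E A = {w \<in> A. \<not> (\<exists>w'\<in>A. w' \<noteq> w \<and> (w', w) \<in> E\<^sup>*)}"

end

theory Submission
  imports Defs
begin

text \<open>Every node \<open>w\<close> of \<open>N'\<close> has the same children as some tree node of \<open>N\<close>, and each
  tree child of that node has \<open>w\<close> as its only parent in \<open>N'\<close>. Descending along such
  children from \<open>w\<close> reaches a leaf all of whose ancestors are comparable with \<open>w\<close>, so
  \<open>C(w) \<subset> C(u)\<close> forces \<open>u\<close> to be a proper ancestor of \<open>w\<close>. Two children of a node are
  never connected by a path, since the last arc of that path would give a hybrid node two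
  parents one below the other. Hence a child \<open>c\<close> of \<open>u\<close> has \<open>C(c) \<subset> C(u)\<close>: as a tree node
  of out-degree at least 2, the representative of \<open>u\<close> has another child \<open>d\<close>, whose leaf
  is not below \<open>c\<close>. So \<open>M_u\<close> lies strictly below \<open>u\<close> and contains its pairwise
  incomparable children, which are therefore exactly its maximal elements.\<close>

definition comparable :: "('a \<times> 'a) set \<Rightarrow> 'a \<Rightarrow> 'a \<Rightarrow> bool" where
  "comparable E x y \<longleftrightarrow> (x, y) \<in> E\<^sup>* \<or> (y, x) \<in> E\<^sup>*"

definition witness_leaf :: "'a set \<Rightarrow> ('a \<times> 'a) set \<Rightarrow> 'a \<Rightarrow> 'a \<Rightarrow> bool" where
  "witness_leaf V E w l \<longleftrightarrow>
     l \<in> leaves V E \<and> (w, l) \<in> E\<^sup>* \<and> (\<forall>x. (x, l) \<in> E\<^sup>* \<longrightarrow> comparable E x w)"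

lemma witness_leaf_exists:
  assumes wf: "wf (E\<inverse>)" and E: "E \<subseteq> V \<times> V"
    and private_child:
      "\<And>w. w \<in> V \<Longrightarrow> children E w \<noteq> {} \<Longrightarrow> \<exists>t. parents E t = {w}"
    and "w \<in> V"
  shows "\<exists>l. witness_leaf V E w l"
  using wf \<open>w \<in> V\<close>
proof (induction w rule: wf_induct_rule)
  case (less w)
  show ?case
  proof (cases "children E w = {}")
    case True
    then have "w \<in> leaves V E"
      using less.prems by (simp add: leaves_def outdeg_def)
    then show ?thesis
      unfolding witness_leaf_def comparable_def by blast
  next
    case False
    then obtain t where t: "parents E t = {w}"
      using private_child less.prems by blast
    then have wt: "(w, t) \<in> E"
      by (auto simp: parents_def)
    then obtain l where l: "witness_leaf V E t l"
      using less.IH E by blast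
    have "comparable E x w" if "(x, l) \<in> E\<^sup>*" for x
    proof -
      have "comparable E x t"
        using l that by (simp add: witness_leaf_def)
      moreover have "(w, x) \<in> E\<^sup>*" if "(t, x) \<in> E\<^sup>*"
        using wt that by (rule converse_rtrancl_into_rtrancl)
      moreover have "(x, w) \<in> E\<^sup>*" if xt: "(x, t) \<in> E\<^sup>+"
      proof -
        obtain y where "(x, y) \<in> E\<^sup>*" "(y, t) \<in> E"
          using tranclD2[OF xt] by blast
        with t show ?thesis
          by (auto simp: parents_def)
      qed
      ultimately show ?thesis
        using wt unfolding comparable_def by (metis rtranclD)
    qed
    with l wt show ?thesis
      unfolding witness_leaf_def by (meson converse_rtrancl_into_rtrancl)
  qed
qed

lemma cluster_psubset_imp_trancl:
  assumes "witness_leaf V E w l" and psub: "cluster V E w \<subset> cluster V E u"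
  shows "(u, w) \<in> E\<^sup>+"
proof -
  have "l \<in> cluster V E u"
    using assms by (auto simp: witness_leaf_def cluster_def)
  then have "comparable E u w"
    using assms(1) by (simp add: witness_leaf_def cluster_def)
  moreover have "(w, u) \<notin> E\<^sup>*"
  proof
    assume "(w, u) \<in> E\<^sup>*"
    then have "cluster V E u \<subseteq> cluster V E w"
      by (auto simp: cluster_def)
    with psub show False
      by blast
  qed
  moreover have "u \<noteq> w"
    using psub by blast
  ultimately show ?thesis
    unfolding comparable_def by (metis rtranclD)
qed

lemma cluster_child_psubset:
  assumes uc: "(u, c) \<in> E" and ud: "(u, d) \<in> E"
    and "\<not> comparable E c d" and "witness_leaf V E d l"
  shows "cluster V E c \<subset> cluster V E u"
proof -
  have "cluster V E c \<subseteq> cluster V E u"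
    using uc by (auto simp: cluster_def intro: converse_rtrancl_into_rtrancl)
  moreover have "l \<in> cluster V E u"
    using assms(4) ud by (auto simp: witness_leaf_def cluster_def
        intro: converse_rtrancl_into_rtrancl)
  moreover have "l \<notin> cluster V E c"
    using assms(3,4) by (auto simp: witness_leaf_def cluster_def comparable_def)
  ultimately show ?thesis
    by blast
qed

lemma path_maximal_eq_children:
  assumes "acyclic E"
    and children: "children E u \<subseteq> A"
    and below: "\<And>w. w \<in> A \<Longrightarrow> (u, w) \<in> E\<^sup>+"
    and incomparable:
      "\<And>c d. c \<in> children E u \<Longrightarrow> d \<in> children E u \<Longrightarrow> c \<noteq> d \<Longrightarrow> \<not> comparable E c d"
  shows "path_maximal E A = children E u"
proof
  show "path_maximal E A \<subseteq> children E u"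
  proof
    fix w
    assume w: "w \<in> path_maximal E A"
    then have "(u, w) \<in> E\<^sup>+"
      using below by (simp add: path_maximal_def)
    then obtain c where c: "(u, c) \<in> E" "(c, w) \<in> E\<^sup>*"
      by (blast dest: tranclD)
    then have "c \<in> A"
      using children by (auto simp: children_def)
    with w c(2) have "c = w"
      unfolding path_maximal_def by blast
    with c(1) show "w \<in> children E u"
      by (simp add: children_def)
  qed
next
  show "children E u \<subseteq> path_maximal E A"
  proof
    fix c
    assume c: "c \<in> children E u"
    have False if "w \<in> A" "w \<noteq> c" "(w, c) \<in> E\<^sup>*" for w
    proof -
      obtain c' where c': "(u, c') \<in> E" "(c', w) \<in> E\<^sup>*"
        using below[OF \<open>w \<in> A\<close>] by (blast dest: tranclD)
      have "(w, c) \<in> E\<^sup>+"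
        using that(2,3) by (simp add: rtrancl_eq_or_trancl)
      with c'(2) have "(c', c) \<in> E\<^sup>+"
        by (rule rtrancl_trancl_trancl)
      moreover from this have "c' \<noteq> c"
        using \<open>acyclic E\<close> unfolding acyclic_def by blast
      moreover have "c' \<in> children E u"
        using c'(1) by (simp add: children_def)
      ultimately show False
        using incomparable[OF _ c] by (auto simp: comparable_def dest: trancl_into_rtrancl)
    qed
    with c children show "c \<in> path_maximal E A"
      unfolding path_maximal_def by blast
  qed
qed

lemma finite_parents_subset: "finite V \<Longrightarrow> E \<subseteq> V \<times> V \<Longrightarrow> finite (parents E x)"
  by (rule finite_subset[of _ V]) (auto simp: parents_def)

lemma finite_children_subset: "finite V \<Longrightarrow> E \<subseteq> V \<times> V \<Longrightarrow> finite (children E x)"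
  by (rule finite_subset[of _ V]) (auto simp: children_def)

lemma siblings_not_trancl:
  assumes "finite V" "E \<subseteq> V \<times> V" "acyclic E" "hybrid_parents_unconnected V E"
    and xc1: "(x, c1) \<in> E" and xc2: "(x, c2) \<in> E"
  shows "(c1, c2) \<notin> E\<^sup>+"
proof
  assume "(c1, c2) \<in> E\<^sup>+"
  then obtain p where p: "(c1, p) \<in> E\<^sup>*" "(p, c2) \<in> E"
    by (blast dest: tranclD2)
  have xp: "(x, p) \<in> E\<^sup>*"
    using xc1 p(1) by (rule converse_rtrancl_into_rtrancl)
  have "p \<noteq> x"
  proof
    assume "p = x"
    with xc1 p(1) have "(x, x) \<in> E\<^sup>+"
      using rtrancl_into_trancl2 by fastforce
    with \<open>acyclic E\<close> show False
      unfolding acyclic_def by blast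
  qed
  have parents: "{x, p} \<subseteq> parents E c2"
    using xc2 p(2) by (auto simp: parents_def)
  have "card {x, p} \<le> indeg E c2"
    unfolding indeg_def using finite_parents_subset[OF assms(1,2)] parents by (rule card_mono)
  with \<open>p \<noteq> x\<close> have "is_hybrid E c2"
    by (simp add: is_hybrid_def)
  moreover have "c2 \<in> V"
    using xc2 assms(2) by auto
  ultimately have "(x, p) \<notin> E\<^sup>*"
    using assms(4) parents \<open>p \<noteq> x\<close> unfolding hybrid_parents_unconnected_def by blast
  with xp show False
    by contradiction
qed

lemma siblings_incomparable:
  assumes "finite V" "E \<subseteq> V \<times> V" "acyclic E" "hybrid_parents_unconnected V E"
    and "(x, c1) \<in> E" "(x, c2) \<in> E" "c1 \<noteq> c2"
  shows "\<not> comparable E c1 c2"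
  using siblings_not_trancl[OF assms(1-6)] siblings_not_trancl[OF assms(1-4,6,5)] assms(7)
  unfolding comparable_def by (metis rtranclD)

locale tc_network =
  fixes V :: "'a set" and E :: "('a \<times> 'a) set" and lab :: "'a \<Rightarrow> 's" and S :: "'s set"
  assumes tree_child: "tree_child_network V E lab S"
    and unconnected: "hybrid_parents_unconnected V E"
begin

abbreviation "V' \<equiv> contracted_nodes V E"
abbreviation "E' \<equiv> contracted_arcs V E"

lemma finite_nodes: "finite V"
  and arcs_subset: "E \<subseteq> V \<times> V"
  and acyclic_arcs: "acyclic E"
  using tree_child unfolding tree_child_network_def rooted_dag_def by auto

lemma nonleaf_has_tree_child: "v \<in> V \<Longrightarrow> v \<notin> leaves V E \<Longrightarrow> \<exists>c\<in>children E v. is_tree_node E c"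
  and tree_node_outdeg: "v \<in> V \<Longrightarrow> is_tree_node E v \<Longrightarrow> outdeg E v \<noteq> 1"
  and hybrid_outdeg: "v \<in> V \<Longrightarrow> is_hybrid E v \<Longrightarrow> outdeg E v = 1"
  using tree_child unfolding tree_child_network_def by auto

lemma finite_children: "finite (children E x)"
  using finite_nodes arcs_subset by (rule finite_children_subset)

lemma finite_parents: "finite (parents E x)"
  using finite_nodes arcs_subset by (rule finite_parents_subset)

lemma tree_node_iff_not_hybrid: "is_tree_node E v \<longleftrightarrow> \<not> is_hybrid E v"
  by (auto simp: is_tree_node_def is_hybrid_def)

lemma tree_node_parents:
  assumes "is_tree_node E t" "(x, t) \<in> E"
  shows "parents E t = {x}"
proof -
  have "card (parents E t) \<le> Suc 0"
    using assms(1) by (simp add: is_tree_node_def indeg_def)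
  moreover have "x \<in> parents E t"
    using assms(2) by (simp add: parents_def)
  ultimately show ?thesis
    using finite_parents by (auto simp: card_le_Suc0_iff_eq)
qed

lemma hybrid_children:
  assumes "h \<in> V" "is_hybrid E h"
  obtains c where "children E h = {c}"
  using hybrid_outdeg[OF assms] by (auto simp: outdeg_def card_1_singleton_iff)

lemma child_of_hybrid:
  assumes "h \<in> V" "is_hybrid E h" "(h, c) \<in> E"
  shows "is_tree_node E c" and "parents E c = {h}"
proof -
  have ch: "children E h = {c}"
    using hybrid_children[OF assms(1,2)] assms(3) by (metis children_def mem_Collect_eq singletonD)
  have "h \<notin> leaves V E"
    using ch by (simp add: leaves_def outdeg_def)
  with ch show tree: "is_tree_node E c"
    using nonleaf_has_tree_child[OF assms(1)] by auto
  show "parents E c = {h}"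
    using tree_node_parents[OF tree assms(3)] .
qed

lemma hybrid_in_contracted: "h \<in> V \<Longrightarrow> is_hybrid E h \<Longrightarrow> h \<in> V'"
  using child_of_hybrid(1) tree_node_iff_not_hybrid unfolding contracted_nodes_def by blast

lemma child_of_nonhybrid_in_contracted:
  assumes "\<not> is_hybrid E x" "(x, y) \<in> E"
  shows "y \<in> V'"
proof -
  have "h = x" if "h \<in> V" "is_hybrid E h" "(h, y) \<in> E" for h
    using child_of_hybrid(2)[OF that] assms(2) by (auto simp: parents_def)
  with assms arcs_subset show ?thesis
    unfolding contracted_nodes_def by blast
qed

text \<open>In \<open>N'\<close> a node \<open>w\<close> has the children of \<open>rep w\<close> in \<open>N\<close>: of \<open>w\<close> itself, or of its
  only child if \<open>w\<close> is hybrid.\<close>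

definition rep :: "'a \<Rightarrow> 'a" where
  "rep w = (if is_hybrid E w then the_elem (children E w) else w)"

lemma rep_nonhybrid: "\<not> is_hybrid E w \<Longrightarrow> rep w = w"
  by (simp add: rep_def)

lemma children_hybrid_rep: "w \<in> V \<Longrightarrow> is_hybrid E w \<Longrightarrow> children E w = {rep w}"
  by (metis hybrid_children rep_def the_elem_eq)

lemma arc_rep: "w \<in> V \<Longrightarrow> is_hybrid E w \<Longrightarrow> (w, rep w) \<in> E"
  using children_hybrid_rep by (auto simp: children_def)

lemma rep_tree_node: "w \<in> V \<Longrightarrow> is_tree_node E (rep w)"
  using arc_rep child_of_hybrid(1) tree_node_iff_not_hybrid rep_nonhybrid by metis

lemma rep_in_nodes: "w \<in> V \<Longrightarrow> rep w \<in> V"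
  using arc_rep arcs_subset rep_nonhybrid by (cases "is_hybrid E w") auto

lemma rep_notin_contracted: "w \<in> V \<Longrightarrow> is_hybrid E w \<Longrightarrow> rep w \<notin> V'"
  using arc_rep unfolding contracted_nodes_def by blast

lemma contracted_children:
  assumes "w \<in> V'"
  shows "children E' w = children E (rep w)"
proof (cases "is_hybrid E w")
  case False
  then have "(w, v) \<in> E' \<longleftrightarrow> (w, v) \<in> E" for v
    using assms child_of_nonhybrid_in_contracted unfolding contracted_arcs_def by blast
  with False show ?thesis
    by (simp add: children_def rep_nonhybrid)
next
  case True
  have "w \<in> V"
    using assms unfolding contracted_nodes_def by blast
  with True have "(w, v) \<in> E' \<longleftrightarrow> (rep w, v) \<in> E" for v
    using children_hybrid_rep[of w] rep_notin_contracted[of w]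
    unfolding contracted_arcs_def children_def by (auto simp: set_eq_iff)
  then show ?thesis
    by (simp add: children_def)
qed

lemma contracted_arcs_subset: "E' \<subseteq> V' \<times> V'"
proof (rule subrelI)
  fix a b
  assume "(a, b) \<in> E'"
  moreover have "a \<in> V' \<and> b \<in> V'"
    if "a \<in> V" "is_hybrid E a" "(a, c) \<in> E" "(c, b) \<in> E" for c
  proof
    show "a \<in> V'"
      using that(1,2) by (rule hybrid_in_contracted)
    have "\<not> is_hybrid E c"
      using child_of_hybrid(1)[OF that(1-3)] tree_node_iff_not_hybrid by blast
    then show "b \<in> V'"
      using that(4) by (rule child_of_nonhybrid_in_contracted)
  qed
  ultimately show "(a, b) \<in> V' \<times> V'"
    unfolding contracted_arcs_def by blast
qed

lemma contracted_arc_iff: "(y, t) \<in> E' \<longleftrightarrow> y \<in> V' \<and> (rep y, t) \<in> E"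
  using contracted_arcs_subset contracted_children by (auto simp: children_def)

lemma parents_rep_hybrid: "w \<in> V \<Longrightarrow> is_hybrid E w \<Longrightarrow> parents E (rep w) = {w}"
  using arc_rep child_of_hybrid(2) by blast

lemma rep_eq_hybrid:
  assumes "y \<in> V'" "w \<in> V'" "rep y = rep w" "is_hybrid E y"
  shows "y = w"
proof -
  have V: "y \<in> V" "w \<in> V"
    using assms(1,2) unfolding contracted_nodes_def by blast+
  have "is_hybrid E w"
  proof (rule ccontr)
    assume "\<not> is_hybrid E w"
    then have "rep y \<in> V'"
      using assms(2,3) rep_nonhybrid by simp
    with V(1) assms(4) show False
      using rep_notin_contracted by blast
  qed
  then have "parents E (rep y) = {w}"
    using parents_rep_hybrid[OF V(2)] assms(3) by metis
  with parents_rep_hybrid[OF V(1) assms(4)] show ?thesis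
    by blast
qed

lemma inj_on_rep: "inj_on rep V'"
proof
  fix y w
  assume "y \<in> V'" "w \<in> V'" "rep y = rep w"
  then show "y = w"
    using rep_eq_hybrid[of y w] rep_eq_hybrid[of w y] rep_nonhybrid by metis
qed

lemma contracted_parents_tree_child:
  assumes "w \<in> V'" "(rep w, t) \<in> E" "is_tree_node E t"
  shows "parents E' t = {w}"
proof -
  have "y = w" if "(y, t) \<in> E'" for y
  proof -
    from that have "y \<in> V'" "(rep y, t) \<in> E"
      using contracted_arc_iff by blast+
    moreover have "parents E t = {rep w}"
      using tree_node_parents[OF assms(3,2)] .
    ultimately have "rep y = rep w"
      by (auto simp: parents_def)
    with \<open>y \<in> V'\<close> assms(1) show "y = w"
      using inj_on_rep by (simp add: inj_on_def)
  qed
  moreover have "(w, t) \<in> E'"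
    using assms contracted_arc_iff by blast
  ultimately show ?thesis
    unfolding parents_def by blast
qed

lemma contracted_trancl_subset: "E'\<^sup>+ \<subseteq> E\<^sup>+"
proof -
  have "E' \<subseteq> E\<^sup>+"
    unfolding contracted_arcs_def by auto
  then have "E'\<^sup>+ \<subseteq> (E\<^sup>+)\<^sup>+"
    by (rule trancl_mono_subset)
  then show ?thesis
    by simp
qed

lemma acyclic_contracted: "acyclic E'"
  using acyclic_arcs contracted_trancl_subset unfolding acyclic_def by blast

lemma wf_converse_contracted: "wf (E'\<inverse>)"
proof (rule finite_acyclic_wf_converse)
  show "finite E'"
    using contracted_arcs_subset finite_nodes finite_subset
    unfolding contracted_nodes_def by fastforce
qed (rule acyclic_contracted)

lemma contracted_witness_leaf:
  assumes "w \<in> V'"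
  shows "\<exists>l. witness_leaf V' E' w l"
proof (rule witness_leaf_exists[OF wf_converse_contracted contracted_arcs_subset _ assms])
  fix v
  assume v: "v \<in> V'" "children E' v \<noteq> {}"
  then have "rep v \<in> V"
    using rep_in_nodes unfolding contracted_nodes_def by blast
  moreover have "rep v \<notin> leaves V E"
    using v contracted_children[OF v(1)] finite_children by (simp add: leaves_def outdeg_def)
  ultimately obtain t where "t \<in> children E (rep v)" "is_tree_node E t"
    using nonleaf_has_tree_child by blast
  with v(1) show "\<exists>t. parents E' t = {v}"
    using contracted_parents_tree_child by (auto simp: children_def)
qed

lemma contracted_siblings_incomparable:
  assumes "w \<in> V'" "c \<in> children E' w" "d \<in> children E' w" "c \<noteq> d"
  shows "\<not> comparable E' c d"
proof -
  have "(rep w, c) \<in> E" "(rep w, d) \<in> E"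
    using assms(2,3) contracted_children[OF assms(1)] by (auto simp: children_def)
  then have "\<not> comparable E c d"
    using siblings_incomparable[OF finite_nodes arcs_subset acyclic_arcs unconnected] assms(4)
    by blast
  then have "(c, d) \<notin> E'\<^sup>+" "(d, c) \<notin> E'\<^sup>+"
    using contracted_trancl_subset unfolding comparable_def by (auto dest: trancl_into_rtrancl)
  with assms(4) show ?thesis
    unfolding comparable_def by (auto simp: rtrancl_eq_or_trancl)
qed

lemma contracted_other_child:
  assumes "u \<in> V'" "c \<in> children E' u"
  obtains d where "d \<in> children E' u" "d \<noteq> c"
proof -
  have u: "rep u \<in> V" "is_tree_node E (rep u)"
    using assms(1) rep_in_nodes rep_tree_node unfolding contracted_nodes_def by blast+
  have "children E (rep u) \<noteq> {c}"
    using tree_node_outdeg[OF u] by (auto simp: outdeg_def)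
  with assms that show ?thesis
    using contracted_children[OF assms(1)] by blast
qed

end

theorem lemma7:
  fixes V :: "'a set" and E :: "('a \<times> 'a) set" and lab :: "'a \<Rightarrow> 's" and S :: "'s set"
  assumes "tree_child_network V E lab S"
    and "hybrid_parents_unconnected V E"
    and "u \<in> contracted_nodes V E"
  shows "path_maximal (contracted_arcs V E)
           {w \<in> contracted_nodes V E.
              cluster (contracted_nodes V E) (contracted_arcs V E) w
              \<subset> cluster (contracted_nodes V E) (contracted_arcs V E) u}
         = children (contracted_arcs V E) u"
proof -
  interpret tc_network V E lab S
    using assms(1,2) by unfold_locales
  have child_nodes: "children E' u \<subseteq> V'"
    using contracted_arcs_subset by (auto simp: children_def)
  show ?thesis
  proof (rule path_maximal_eq_children[OF acyclic_contracted])
    show "children E' u \<subseteq> {w \<in> V'. cluster V' E' w \<subset> cluster V' E' u}"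
    proof
      fix c
      assume c: "c \<in> children E' u"
      obtain d where d: "d \<in> children E' u" "d \<noteq> c"
        using contracted_other_child[OF assms(3) c] .
      obtain l where l: "witness_leaf V' E' d l"
        using contracted_witness_leaf d(1) child_nodes by blast
      have "(u, c) \<in> E'" "(u, d) \<in> E'"
        using c d(1) by (simp_all add: children_def)
      then have "cluster V' E' c \<subset> cluster V' E' u"
        using contracted_siblings_incomparable[OF assms(3) c d(1) not_sym[OF d(2)]] l
        by (rule cluster_child_psubset)
      with c child_nodes show "c \<in> {w \<in> V'. cluster V' E' w \<subset> cluster V' E' u}"
        by blast
    qed
  next
    fix w
    assume w: "w \<in> {w \<in> V'. cluster V' E' w \<subset> cluster V' E' u}"
    then obtain l where "witness_leaf V' E' w l"
      using contracted_witness_leaf by blast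
    with w show "(u, w) \<in> E'\<^sup>+"
      by (blast intro: cluster_psubset_imp_trancl)
  next
    show "\<And>c d. c \<in> children E' u \<Longrightarrow> d \<in> children E' u \<Longrightarrow> c \<noteq> d \<Longrightarrow> \<not> comparable E' c d"
      by (rule contracted_siblings_incomparable[OF assms(3)])
  qed
qed

end
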